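(* Let $Q=\langle b\rangle\ltimes_{(g,\gamma)}X$ and let $S$ be a nonempty subset of $Q$. Then $S$ is a normal subloop of $Q$ with $S\cap(1\times X)=S\cap(C\times 0)=\{(1,0)\}$ if and only if there exist $k\in\mathbb Z$ and $z\in X$ such that $S=\langle(b^k,z)\rangle=\{(b^{ki},iz):i\in\mathbb Z\}$, the orders satisfy $|b^k|=|z|$, and $(b^k,z)\in Z(Q)$.
   Context: Let $(X,+)$ be an abelian group and $(g,\gamma)$ a construction pair on it: $g$ a permutation of $X$, $\gamma:X\times X\to X$ symmetric, alternating, biadditive, with (C1) $g^{-1}(g(x)+g(y))=x+y+\gamma(x,y)+g^{-1}(\gamma(x,y))+g^{-2}(\gamma(x,y))$, (C2) $\gamma(\gamma(x,y),z)=0$, (C3) $g^{-1}(\gamma(x,y))=\gamma(g(x),y)$ for all $x,y,z$. Let $\mathrm{Rad}(\gamma)=\{x:\gamma(x,y)=0\ \forall y\}$ and $r(g,\gamma)$ the least positive $r$ with $\sum_{0\le k<r}g^k(x)\in\mathrm{Rad}(\gamma)$ for all $x$ ($\infty$ if none). $I(i,j)$ is $\emptyset$ if $i=j$, $\{i,\dots,j-1\}$ if $i<j$, $\{j,\dots,i-1\}$ if $j<i$. For a cyclic group $C=\langle b\rangle$ such that (if finite) $|g|$ and $r(g,\gamma)$ divide $|C|$, $C\ltimes_{(g,\gamma)}X$ is the Moufang loop on $C\times X$ with multiplication $(b^i,x)(b^j,y)=(b^{i+j},g^{-j}(x)+y+\sum_{k\in I(i+j,-j)}g^{-k}(\gamma(x,y)))$,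 neutral element $(1,0)$. $Z(Q)$ is the center: elements of the nucleus that commute with all elements. *)

theory Defs
  imports Main
begin

(* Integer powers of a permutation g of the abelian group X (X = UNIV :: 'a). *)
definition gpow :: "('a \<Rightarrow> 'a) \<Rightarrow> int \<Rightarrow> 'a \<Rightarrow> 'a" where
  "gpow g k = (if 0 \<le> k then g ^^ nat k else (inv g) ^^ nat (- k))"

fun nsmul :: "nat \<Rightarrow> 'a::ab_group_add \<Rightarrow> 'a" where
  "nsmul 0 x = 0"
| "nsmul (Suc m) x = x + nsmul m x"

definition zsmul :: "int \<Rightarrow> 'a::ab_group_add \<Rightarrow> 'a" where
  "zsmul i x = (if 0 \<le> i then nsmul (nat i) x else - nsmul (nat (- i)) x)"

(* additive order of z in X; 0 encodes infinite order *)
definition addord :: "'a::ab_group_add \<Rightarrow> nat" where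
  "addord z = (if \<exists>m>0. nsmul m z = 0 then (LEAST m. m > 0 \<and> nsmul m z = 0) else 0)"

(* The cyclic group C = <b> of order n (n = 0: infinite cyclic) is modelled by
   exponents i :: int normalised as i mod n (so b^i ~ i mod n).
   Order of b^k in C; 0 encodes infinite order. *)
definition cord :: "nat \<Rightarrow> int \<Rightarrow> nat" where
  "cord n k = (if \<exists>m>0. (int m * k) mod int n = 0
               then (LEAST m. m > 0 \<and> (int m * k) mod int n = 0) else 0)"

definition Rad :: "('a \<Rightarrow> 'a \<Rightarrow> 'a::ab_group_add) \<Rightarrow> 'a set" where
  "Rad \<gamma> = {x. \<forall>y. \<gamma> x y = 0}"

definition r_prop :: "('a \<Rightarrow> 'a) \<Rightarrow> ('a \<Rightarrow> 'a \<Rightarrow> 'a::ab_group_add) \<Rightarrow> nat \<Rightarrow> bool" where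
  "r_prop g \<gamma> r = (\<forall>x. (\<Sum>k<r. (g ^^ k) x) \<in> Rad \<gamma>)"

definition construction_pair :: "('a \<Rightarrow> 'a) \<Rightarrow> ('a \<Rightarrow> 'a \<Rightarrow> 'a::ab_group_add) \<Rightarrow> bool" where
  "construction_pair g \<gamma> \<longleftrightarrow>
     bij g
   \<and> (\<forall>x y. \<gamma> x y = \<gamma> y x)
   \<and> (\<forall>x. \<gamma> x x = 0)
   \<and> (\<forall>x y z. \<gamma> (x + y) z = \<gamma> x z + \<gamma> y z)
   \<and> (\<forall>x y z. \<gamma> x (y + z) = \<gamma> x y + \<gamma> x z)
   \<and> (\<forall>x y. inv g (g x + g y) = x + y + \<gamma> x y + inv g (\<gamma> x y) + inv g (inv g (\<gamma> x y)))
   \<and> (\<forall>x y z. \<gamma> (\<gamma> x y) z = 0)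
   \<and> (\<forall>x y. inv g (\<gamma> x y) = \<gamma> (g x) y)"

(* hypothesis on C of order n: if finite, |g| and r(g,gamma) divide |C| *)
definition admissible_order :: "nat \<Rightarrow> ('a \<Rightarrow> 'a) \<Rightarrow> ('a \<Rightarrow> 'a \<Rightarrow> 'a::ab_group_add) \<Rightarrow> bool" where
  "admissible_order n g \<gamma> \<longleftrightarrow>
     (n > 0 \<longrightarrow> (g ^^ n = id
                 \<and> (\<exists>r>0. r_prop g \<gamma> r)
                 \<and> (LEAST r. r > 0 \<and> r_prop g \<gamma> r) dvd n))"

definition Iset :: "int \<Rightarrow> int \<Rightarrow> int set" where
  "Iset i j = (if i = j then {} else if i < j then {i..j - 1} else {j..i - 1})"

definition Qcar :: "nat \<Rightarrow> (int \<times> 'a) set" where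
  "Qcar n = {p. fst p mod int n = fst p}"

definition Qmult :: "nat \<Rightarrow> ('a \<Rightarrow> 'a) \<Rightarrow> ('a \<Rightarrow> 'a \<Rightarrow> 'a::ab_group_add)
                      \<Rightarrow> int \<times> 'a \<Rightarrow> int \<times> 'a \<Rightarrow> int \<times> 'a" where
  "Qmult n g \<gamma> p q = (case p of (i, x) \<Rightarrow> case q of (j, y) \<Rightarrow>
      ((i + j) mod int n,
       gpow g (- j) x + y + (\<Sum>k\<in>Iset (i + j) (- j). gpow g (- k) (\<gamma> x y))))"

definition Qldiv where
  "Qldiv n g \<gamma> a b = (THE z. z \<in> Qcar n \<and> Qmult n g \<gamma> a z = b)"

definition Qrdiv where
  "Qrdiv n g \<gamma> b a = (THE z. z \<in> Qcar n \<and> Qmult n g \<gamma> z a = b)"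

definition subloop where
  "subloop n g \<gamma> S \<longleftrightarrow> S \<subseteq> Qcar n \<and> S \<noteq> {}
     \<and> (\<forall>a\<in>S. \<forall>b\<in>S. Qmult n g \<gamma> a b \<in> S \<and> Qldiv n g \<gamma> a b \<in> S \<and> Qrdiv n g \<gamma> b a \<in> S)"

definition normal_subloop where
  "normal_subloop n g \<gamma> S \<longleftrightarrow> subloop n g \<gamma> S \<and>
     (\<forall>x\<in>Qcar n. \<forall>y\<in>Qcar n.
        (\<lambda>s. Qmult n g \<gamma> x s) ` S = (\<lambda>s. Qmult n g \<gamma> s x) ` S
      \<and> (\<lambda>s. Qmult n g \<gamma> x (Qmult n g \<gamma> y s)) ` S = (\<lambda>s. Qmult n g \<gamma> (Qmult n g \<gamma> x y) s) ` S
      \<and> (\<lambda>s. Qmult n g \<gamma> (Qmult n g \<gamma> s x) y) ` S = (\<lambda>s. Qmult n g \<gamma> s (Qmult n g \<gamma> x y)) ` S)"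

definition gen_subloop where
  "gen_subloop n g \<gamma> a = \<Inter> {T. subloop n g \<gamma> T \<and> a \<in> T}"

definition nucleus where
  "nucleus n g \<gamma> = {a \<in> Qcar n. \<forall>x\<in>Qcar n. \<forall>y\<in>Qcar n.
      Qmult n g \<gamma> (Qmult n g \<gamma> a x) y = Qmult n g \<gamma> a (Qmult n g \<gamma> x y)
    \<and> Qmult n g \<gamma> (Qmult n g \<gamma> x a) y = Qmult n g \<gamma> x (Qmult n g \<gamma> a y)
    \<and> Qmult n g \<gamma> (Qmult n g \<gamma> x y) a = Qmult n g \<gamma> x (Qmult n g \<gamma> y a)}"

definition center where
  "center n g \<gamma> = {a \<in> nucleus n g \<gamma>. \<forall>x\<in>Qcar n. Qmult n g \<gamma> a x = Qmult n g \<gamma> x a}"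

end

theory Submission
  imports Defs
begin

text \<open>
  If \<open>S\<close> meets both \<open>1 \<times> X\<close> and \<open>C \<times> 0\<close> trivially, the projection to \<open>C\<close> is injective on \<open>S\<close>.
  Normality then forces every element of \<open>S\<close> to be central: for \<open>s \<in> S\<close> the element \<open>xs\<close>
  equals \<open>s'x\<close> for some \<open>s' \<in> S\<close> with the same \<open>C\<close>-coordinate as \<open>s\<close>, hence \<open>s' = s\<close>, and
  likewise for the associator conditions. The \<open>C\<close>-coordinates realised in \<open>S\<close> form a subgroup
  of \<open>\<int>/n\<close> with generator \<open>b\<^sup>k\<close>, and \<open>S\<close> is generated by its element \<open>(b\<^sup>k, z)\<close>. Central elements
  have \<open>g\<close>-fixed second coordinate, so powers of \<open>(b\<^sup>k, z)\<close> are \<open>(b\<^sup>k\<^sup>i, iz)\<close>; trivial intersection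
  with the two factors then says exactly \<open>|b\<^sup>k| = |z|\<close>. Conversely the powers of a central
  element always form a normal subloop.
\<close>

lemma nsmul_zero_right [simp]: "nsmul m (0::'a::ab_group_add) = 0"
  by (induct m) simp_all

lemma zsmul_zero_left [simp]: "zsmul 0 x = 0"
  by (simp add: zsmul_def)

lemma zsmul_zero_right [simp]: "zsmul i (0::'a::ab_group_add) = 0"
  by (simp add: zsmul_def)

lemma zsmul_of_nat [simp]: "zsmul (int m) x = nsmul m x"
  by (simp add: zsmul_def)

lemma zsmul_one [simp]: "zsmul 1 x = x"
  by (simp add: zsmul_def)

lemma zsmul_succ: "zsmul (i + 1) x = x + zsmul i x"
proof (cases "i \<ge> 0")
  case True
  then have "nat (i + 1) = Suc (nat i)" by simp
  with True show ?thesis by (simp add: zsmul_def)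
next
  case False
  show ?thesis
  proof (cases "i = -1")
    case True then show ?thesis by (simp add: zsmul_def)
  next
    case False
    with \<open>\<not> i \<ge> 0\<close> have "nat (- i) = Suc (nat (- (i + 1)))" by simp
    with \<open>\<not> i \<ge> 0\<close> False show ?thesis by (simp add: zsmul_def algebra_simps)
  qed
qed

lemma zsmul_add: "zsmul (a + b) x = zsmul a x + zsmul b x"
proof (induct b rule: int_induct[where k = 0])
  case base then show ?case by simp
next
  case (step1 i)
  have "zsmul (a + (i + 1)) x = x + zsmul (a + i) x"
    using zsmul_succ[of "a + i" x] by (simp add: add.assoc)
  also have "\<dots> = zsmul a x + (x + zsmul i x)" using step1 by (simp add: algebra_simps)
  finally show ?case by (simp add: zsmul_succ)
next
  case (step2 i)
  have "zsmul i x = x + zsmul (i - 1) x" "zsmul (a + i) x = x + zsmul (a + (i - 1)) x"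
    using zsmul_succ[of "i - 1" x] zsmul_succ[of "a + (i - 1)" x] by simp_all
  with step2 show ?case by (simp add: algebra_simps)
qed

lemma zsmul_diff: "zsmul (a - b) x = zsmul a x - zsmul b x"
  using zsmul_add[of "a - b" b x] by (simp add: algebra_simps)

definition int_subgroup_gen :: "(int \<Rightarrow> bool) \<Rightarrow> nat" where
  "int_subgroup_gen Z = (if \<exists>m>0. Z (int m) then LEAST m. m > 0 \<and> Z (int m) else 0)"

lemma int_subgroup_mult_closed:
  fixes Z :: "int \<Rightarrow> bool"
  assumes zero: "Z 0" and diff: "\<And>i j. Z i \<Longrightarrow> Z j \<Longrightarrow> Z (i - j)" and "Z c"
  shows "Z (c * t)"
proof (induct t rule: int_induct[where k = 0])
  case (step1 i)
  have "c * (i + 1) = c * i - (0 - c)" by (simp add: algebra_simps)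
  then show ?case using diff[OF step1(2) diff[OF zero \<open>Z c\<close>]] by simp
next
  case (step2 i)
  have "c * (i - 1) = c * i - c" by (simp add: algebra_simps)
  then show ?case using diff[OF step2(2) \<open>Z c\<close>] by simp
qed (simp add: zero)

lemma int_subgroup_gen_dvd_iff:
  assumes zero: "Z 0" and diff: "\<And>i j. Z i \<Longrightarrow> Z j \<Longrightarrow> Z (i - j)"
  shows "Z i \<longleftrightarrow> int (int_subgroup_gen Z) dvd i"
proof (cases "\<exists>m>0. Z (int m)")
  case True
  define c where "c = (LEAST m. m > 0 \<and> Z (int m))"
  have gen: "int_subgroup_gen Z = c" using True by (simp add: int_subgroup_gen_def c_def)
  have c: "c > 0" "Z (int c)"
    unfolding c_def using LeastI_ex[of "\<lambda>m. m > 0 \<and> Z (int m)"] True by blast+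
  note multiple = int_subgroup_mult_closed[OF zero diff c(2)]
  show ?thesis
  proof
    assume "Z i"
    have "i mod int c = i - int c * (i div int c)" by (simp add: minus_div_mult_eq_mod[symmetric])
    then have Zr: "Z (i mod int c)" using diff[OF \<open>Z i\<close> multiple] by simp
    have "i mod int c = 0"
    proof (rule ccontr)
      assume "i mod int c \<noteq> 0"
      moreover have "0 \<le> i mod int c" using c(1) by simp
      ultimately have "nat (i mod int c) > 0 \<and> Z (int (nat (i mod int c)))" using Zr by simp
      then have "c \<le> nat (i mod int c)" unfolding c_def by (rule Least_le)
      then have "int c \<le> i mod int c" using \<open>0 \<le> i mod int c\<close> by (simp add: le_nat_iff)
      moreover have "i mod int c < int c" using c(1) by simp
      ultimately show False by linarith
    qed
    then show "int (int_subgroup_gen Z) dvd i" using gen by (simp add: dvd_eq_mod_eq_0)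
  next
    assume "int (int_subgroup_gen Z) dvd i"
    then show "Z i" using gen multiple by (auto elim: dvdE)
  qed
next
  case False
  then have gen: "int_subgroup_gen Z = 0" unfolding int_subgroup_gen_def by argo
  have "i = 0" if "Z i" for i
  proof (rule ccontr)
    assume "i \<noteq> 0"
    moreover have "Z (- i)" using diff[OF zero that] by simp
    ultimately have "Z (int (nat \<bar>i\<bar>)) \<and> nat \<bar>i\<bar> > 0" using that by (simp add: abs_if)
    with False show False by blast
  qed
  then show ?thesis using gen zero by auto
qed

lemma cord_dvd_iff: "(i * k) mod int n = 0 \<longleftrightarrow> int (cord n k) dvd i"
proof -
  have "cord n k = int_subgroup_gen (\<lambda>i. (i * k) mod int n = 0)"
    by (simp add: cord_def int_subgroup_gen_def)
  moreover have "(i * k) mod int n = 0 \<longleftrightarrow> int (int_subgroup_gen (\<lambda>i. (i * k) mod int n = 0)) dvd i"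
    by (rule int_subgroup_gen_dvd_iff) (auto simp: left_diff_distrib intro: dvd_diff)
  ultimately show ?thesis by simp
qed

lemma addord_dvd_iff: "zsmul i z = 0 \<longleftrightarrow> int (addord z) dvd i"
proof -
  have "addord z = int_subgroup_gen (\<lambda>i. zsmul i z = 0)"
    unfolding addord_def int_subgroup_gen_def zsmul_of_nat by (rule refl)
  moreover have "zsmul i z = 0 \<longleftrightarrow> int (int_subgroup_gen (\<lambda>i. zsmul i z = 0)) dvd i"
    by (rule int_subgroup_gen_dvd_iff) (simp_all add: zsmul_diff)
  ultimately show ?thesis by simp
qed

definition Qpow :: "nat \<Rightarrow> int \<Rightarrow> 'a::ab_group_add \<Rightarrow> int \<Rightarrow> int \<times> 'a" where
  "Qpow n k z i = ((k * i) mod int n, zsmul i z)"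

lemma range_Qpow: "{((k * i) mod int n, zsmul i z) | i. True} = range (Qpow n k z)"
  by (auto simp: Qpow_def)

lemma fst_Qcar: "fst ` (Qcar n :: (int \<times> 'b) set) = {i. i mod int n = i}"
proof safe
  fix i :: int assume "i mod int n = i"
  then show "i \<in> fst ` (Qcar n :: (int \<times> 'b) set)"
    by (intro image_eqI[of _ _ "(i, undefined)"]) (simp_all add: Qcar_def)
qed (auto simp: Qcar_def)

lemma range_inter_eq_singleton_iff:
  assumes "f a \<in> A"
  shows "range f \<inter> A = {f a} \<longleftrightarrow> (\<forall>i. f i \<in> A \<longrightarrow> f i = f a)"
  using assms by blast

lemma cord_eq_addord_iff:
  "cord n k = addord z \<longleftrightarrow>
     range (Qpow n k z) \<inter> {(0, x) | x. True} = {(0, 0)}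
   \<and> range (Qpow n k z) \<inter> {(i, 0) | i. i mod int n = i} = {(0, 0)}"
proof -
  have zero: "(0, 0) = Qpow n k z 0" by (simp add: Qpow_def)
  have "range (Qpow n k z) \<inter> {(0, x) | x. True} = {(0, 0)}
      \<longleftrightarrow> (\<forall>i. (k * i) mod int n = 0 \<longrightarrow> zsmul i z = 0)"
    unfolding zero by (subst range_inter_eq_singleton_iff) (simp_all add: Qpow_def)
  moreover have "range (Qpow n k z) \<inter> {(i, 0) | i. i mod int n = i} = {(0, 0)}
      \<longleftrightarrow> (\<forall>i. zsmul i z = 0 \<longrightarrow> (k * i) mod int n = 0)"
    unfolding zero by (subst range_inter_eq_singleton_iff) (simp_all add: Qpow_def)
  moreover have "cord n k = addord z \<longleftrightarrow> (\<forall>i. int (cord n k) dvd i \<longleftrightarrow> int (addord z) dvd i)"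
    by (metis dvd_refl int_dvd_int_iff dvd_antisym)
  ultimately show ?thesis by (auto simp: mult.commute[of k] cord_dvd_iff addord_dvd_iff)
qed

lemma mod_add_left_cancel_normalized:
  fixes i j j' :: int
  assumes "j mod m = j" "j' mod m = j'" "(i + j) mod m = (i + j') mod m"
  shows "j = j'"
proof -
  have "((i + j) - i) mod m = ((i + j') - i) mod m" using assms(3) by (metis mod_diff_left_eq)
  with assms(1,2) show ?thesis by simp
qed

lemma image_eq_imp_eq_on_fst_injective:
  fixes S :: "(int \<times> 'b) set"
  assumes "f ` S = h ` S" and "inj_on fst S" and "S \<subseteq> Qcar n" and "s \<in> S"
    and "\<And>s. fst (f s) = (c + fst s) mod int n" and "\<And>s. fst (h s) = (c + fst s) mod int n"
  shows "f s = h s"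
proof -
  obtain s' where s': "s' \<in> S" "f s = h s'" using assms(1,4) by (metis imageE imageI)
  have "fst s mod int n = fst s" "fst s' mod int n = fst s'"
    using assms(3,4) s'(1) by (auto simp: Qcar_def)
  moreover have "(c + fst s) mod int n = (c + fst s') mod int n" using s'(2) assms(5,6) by metis
  ultimately have "fst s = fst s'" by (rule mod_add_left_cancel_normalized)
  with assms(2,4) s' show ?thesis by (metis inj_onD)
qed

locale Qloop =
  fixes n :: nat and g :: "'a::ab_group_add \<Rightarrow> 'a" and \<gamma> :: "'a \<Rightarrow> 'a \<Rightarrow> 'a"
  assumes construction_pair: "construction_pair g \<gamma>"
    and admissible_order: "admissible_order n g \<gamma>"
begin

abbreviation M where "M \<equiv> Qmult n g \<gamma>"

lemma bij_g: "bij g"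
  using construction_pair unfolding construction_pair_def by blast
lemma gamma_sym: "\<gamma> x y = \<gamma> y x"
  using construction_pair unfolding construction_pair_def by blast
lemma gamma_self [simp]: "\<gamma> x x = 0"
  using construction_pair unfolding construction_pair_def by blast
lemma gamma_add_left: "\<gamma> (x + y) z = \<gamma> x z + \<gamma> y z"
  using construction_pair unfolding construction_pair_def by blast
lemma gamma_add_right: "\<gamma> x (y + z) = \<gamma> x y + \<gamma> x z"
  using construction_pair unfolding construction_pair_def by blast
lemma inv_g_add: "inv g (g x + g y) = x + y + \<gamma> x y + inv g (\<gamma> x y) + inv g (inv g (\<gamma> x y))"
  using construction_pair unfolding construction_pair_def by blast
lemma gamma_gamma_left [simp]: "\<gamma> (\<gamma> x y) z = 0"
  using construction_pair unfolding construction_pair_def by blast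
lemma inv_g_gamma: "inv g (\<gamma> x y) = \<gamma> (g x) y"
  using construction_pair unfolding construction_pair_def by blast

lemma g_inv_g [simp]: "g (inv g x) = x"
  using bij_g by (simp add: bij_def surj_f_inv_f)
lemma inv_g_g [simp]: "inv g (g x) = x"
  using bij_g by (simp add: bij_def inv_f_f)

lemma gamma_zero_right [simp]: "\<gamma> x 0 = 0"
  using gamma_add_right[of x 0 0] by simp
lemma gamma_zero_left [simp]: "\<gamma> 0 x = 0"
  using gamma_add_left[of 0 0 x] by simp
lemma gamma_uminus_right: "\<gamma> x (- y) = - \<gamma> x y"
  using gamma_add_right[of x y "- y"] by (simp add: eq_neg_iff_add_eq_0 add.commute)
lemma gamma_uminus_left: "\<gamma> (- x) y = - \<gamma> x y"
  using gamma_add_left[of x "- x" y] by (simp add: eq_neg_iff_add_eq_0 add.commute)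
lemma gamma_gamma_right [simp]: "\<gamma> x (\<gamma> y z) = 0"
  using gamma_sym gamma_gamma_left by metis

lemma inv_g_zero [simp]: "inv g 0 = 0"
  using inv_g_gamma[of 0 0] by simp
lemma g_zero [simp]: "g 0 = 0"
  using g_inv_g[of 0] by simp

lemma gpow_zero_right [simp]: "gpow g k 0 = 0"
proof -
  have "(g ^^ m) 0 = 0" "(inv g ^^ m) 0 = 0" for m by (induct m) simp_all
  then show ?thesis by (simp add: gpow_def)
qed

lemma gpow_zero_left [simp]: "gpow g 0 = id"
  by (simp add: gpow_def)

lemma gpow_uminus_gamma: "gpow g (- k) (\<gamma> x y) = \<gamma> (gpow g k x) y"
proof -
  have g_gamma: "g (\<gamma> x y) = \<gamma> (inv g x) y" for x y
    using arg_cong[OF inv_g_gamma[of "inv g x" y], of g] by simp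
  have "(inv g ^^ m) (\<gamma> x y) = \<gamma> ((g ^^ m) x) y" for m
    by (induct m) (simp_all add: inv_g_gamma)
  moreover have "(g ^^ m) (\<gamma> x y) = \<gamma> ((inv g ^^ m) x) y" for m
    by (induct m) (simp_all add: g_gamma)
  ultimately show ?thesis by (cases "k = 0") (auto simp: gpow_def)
qed

definition twist :: "'a \<Rightarrow> int set \<Rightarrow> 'a \<Rightarrow> 'a" where
  "twist x A w = (\<Sum>k\<in>A. \<gamma> (gpow g k x) w)"

lemma Qmult_eq:
  "M (i, x) (j, y) = ((i + j) mod int n, gpow g (- j) x + y + twist x (Iset (i + j) (- j)) y)"
  by (simp add: Qmult_def twist_def gpow_uminus_gamma)

lemma fst_Qmult: "fst (M p q) = (fst p + fst q) mod int n"
  by (cases p; cases q) (simp add: Qmult_eq)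

lemma fst_Qmult_assoc:
  "fst (M (M p q) r) = (fst p + fst q + fst r) mod int n"
  "fst (M p (M q r)) = (fst p + fst q + fst r) mod int n"
  by (simp_all add: fst_Qmult mod_add_left_eq mod_add_right_eq add.assoc)

lemma gamma_sum_right: "\<gamma> u (sum f A) = (\<Sum>k\<in>A. \<gamma> u (f k))"
  by (induct A rule: infinite_finite_induct) (simp_all add: gamma_add_right)

lemma twist_diff: "twist x A (w - w') = twist x A w - twist x A w'"
proof -
  have "\<gamma> u (w - w') = \<gamma> u w - \<gamma> u w'" for u using gamma_add_right[of u "w - w'" w'] by simp
  then show ?thesis by (simp add: twist_def sum_subtractf)
qed

lemma twist_zero_left [simp]: "twist 0 A w = 0"
  by (simp add: twist_def)

lemma twist_zero_right [simp]: "twist x A 0 = 0"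
  by (simp add: twist_def)

lemma twist_twist [simp]: "twist x A (twist y B w) = 0"
  by (simp add: twist_def[of x] twist_def[of y] gamma_sum_right)

lemma Qmult_closed [simp]: "M p q \<in> Qcar n"
  by (cases p; cases q) (simp add: Qmult_eq Qcar_def)

lemma unit_in_Qcar [simp]: "(0, 0) \<in> Qcar n"
  by (simp add: Qcar_def)

lemma Qmult_unit_left: "p \<in> Qcar n \<Longrightarrow> M (0, 0) p = p"
  by (cases p) (simp add: Qmult_eq Qcar_def)

lemma Qmult_unit_right: "p \<in> Qcar n \<Longrightarrow> M p (0, 0) = p"
  by (cases p) (simp add: Qmult_eq Qcar_def)

text \<open>Since \<open>twist x A\<close> is additive with square zero, \<open>y \<mapsto> y + twist x A y\<close> is a bijection
  with inverse \<open>y \<mapsto> y - twist x A y\<close>; this gives unique left division.\<close>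

lemma Qmult_left_cancel:
  assumes "c \<in> Qcar n" "c' \<in> Qcar n" "M a c = M a c'"
  shows "c = c'"
proof -
  obtain i x j y j' y' where a: "a = (i, x)" and c: "c = (j, y)" and c': "c' = (j', y')"
    by (metis surj_pair)
  have "(i + j) mod int n = (i + j') mod int n" using assms(3) a c c' by (simp add: Qmult_eq)
  with assms(1,2) c c' have j: "j = j'"
    by (intro mod_add_left_cancel_normalized[of j "int n" j' i]) (simp_all add: Qcar_def)
  define A where "A = Iset (i + j) (- j)"
  have "y + twist x A y = y' + twist x A y'"
    using assms(3) a c c' j by (simp add: Qmult_eq A_def add.assoc)
  then have d: "y - y' = twist x A y' - twist x A y" by (simp add: algebra_simps)
  have "twist x A y - twist x A y' = twist x A (twist x A y' - twist x A y)"
    unfolding twist_diff[symmetric] d ..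
  also have "\<dots> = 0" by (simp only: twist_diff twist_twist diff_self)
  finally show ?thesis using d j c c' by simp
qed

lemma Qmult_left_solvable:
  assumes "b \<in> Qcar n"
  shows "\<exists>c\<in>Qcar n. M a c = b"
proof -
  obtain i x l w where a: "a = (i, x)" and b: "b = (l, w)" by (metis surj_pair)
  define j where "j = (l - i) mod int n"
  define A where "A = Iset (i + j) (- j)"
  define v where "v = w - gpow g (- j) x"
  have "(i + j) mod int n = l"
    using assms b unfolding j_def by (simp add: Qcar_def mod_add_right_eq)
  moreover have "twist x A (v - twist x A v) = twist x A v" by (simp add: twist_diff)
  ultimately have "M a (j, v - twist x A v) = b" using a b by (simp add: Qmult_eq A_def v_def)
  moreover have "(j, v - twist x A v) \<in> Qcar n" by (simp add: Qcar_def j_def)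
  ultimately show ?thesis by blast
qed

lemma Qldiv:
  assumes "b \<in> Qcar n"
  shows "Qldiv n g \<gamma> a b \<in> Qcar n" and "M a (Qldiv n g \<gamma> a b) = b"
proof -
  have "\<exists>!c. c \<in> Qcar n \<and> M a c = b"
    using Qmult_left_solvable[OF assms] Qmult_left_cancel by blast
  then have "Qldiv n g \<gamma> a b \<in> Qcar n \<and> M a (Qldiv n g \<gamma> a b) = b"
    unfolding Qldiv_def by (rule theI')
  then show "Qldiv n g \<gamma> a b \<in> Qcar n" "M a (Qldiv n g \<gamma> a b) = b" by simp_all
qed

lemma Qldiv_eqI: "c \<in> Qcar n \<Longrightarrow> M a c = b \<Longrightarrow> Qldiv n g \<gamma> a b = c"
  unfolding Qldiv_def by (rule the_equality) (auto intro: Qmult_left_cancel)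

lemma centerD:
  assumes "a \<in> center n g \<gamma>"
  shows "a \<in> Qcar n"
    and "\<And>x. x \<in> Qcar n \<Longrightarrow> M a x = M x a"
    and "\<And>x y. x \<in> Qcar n \<Longrightarrow> y \<in> Qcar n \<Longrightarrow> M (M a x) y = M a (M x y)"
    and "\<And>x y. x \<in> Qcar n \<Longrightarrow> y \<in> Qcar n \<Longrightarrow> M (M x a) y = M x (M a y)"
    and "\<And>x y. x \<in> Qcar n \<Longrightarrow> y \<in> Qcar n \<Longrightarrow> M (M x y) a = M x (M y a)"
  using assms by (auto simp: center_def nucleus_def)

lemma centerI:
  assumes "a \<in> Qcar n"
    and "\<And>x. x \<in> Qcar n \<Longrightarrow> M a x = M x a"
    and "\<And>x y. x \<in> Qcar n \<Longrightarrow> y \<in> Qcar n \<Longrightarrow> M (M a x) y = M a (M x y)"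
    and "\<And>x y. x \<in> Qcar n \<Longrightarrow> y \<in> Qcar n \<Longrightarrow> M (M x a) y = M x (M a y)"
    and "\<And>x y. x \<in> Qcar n \<Longrightarrow> y \<in> Qcar n \<Longrightarrow> M (M x y) a = M x (M y a)"
  shows "a \<in> center n g \<gamma>"
  using assms by (auto simp: center_def nucleus_def)

lemma Qrdiv_eqI: "c \<in> Qcar n \<Longrightarrow> a \<in> center n g \<gamma> \<Longrightarrow> M c a = b \<Longrightarrow> Qrdiv n g \<gamma> b a = c"
  unfolding Qrdiv_def by (rule the_equality) (metis centerD(2) Qmult_left_cancel)+

lemma unit_in_center: "(0, 0) \<in> center n g \<gamma>"
  by (rule centerI) (simp_all add: Qmult_unit_left Qmult_unit_right)

lemma center_commI:
  assumes a: "a \<in> Qcar n"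
    and comm: "\<And>x. x \<in> Qcar n \<Longrightarrow> M a x = M x a"
    and left: "\<And>x y. x \<in> Qcar n \<Longrightarrow> y \<in> Qcar n \<Longrightarrow> M (M a x) y = M a (M x y)"
    and middle: "\<And>x y. x \<in> Qcar n \<Longrightarrow> y \<in> Qcar n \<Longrightarrow> M (M x a) y = M x (M a y)"
  shows "a \<in> center n g \<gamma>"
proof (rule centerI[OF a comm left middle])
  fix x y :: "int \<times> 'a" assume x: "x \<in> Qcar n" and y: "y \<in> Qcar n"
  have "M (M x y) a = M a (M x y)" using comm by simp
  also have "\<dots> = M (M x a) y" using left[OF x y] comm[OF x] by simp
  also have "\<dots> = M x (M y a)" using middle[OF x y] comm[OF y] by simp
  finally show "M (M x y) a = M x (M y a)" .
qed

lemma center_Qmult_closed: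
  assumes a: "a \<in> center n g \<gamma>" and b: "b \<in> center n g \<gamma>"
  shows "M a b \<in> center n g \<gamma>"
proof -
  note bQ = centerD(1)[OF b]
  note ac = centerD(2)[OF a] and a1 = centerD(3)[OF a] and a2 = centerD(4)[OF a]
  note bc = centerD(2)[OF b] and b1 = centerD(3)[OF b] and b2 = centerD(4)[OF b]
  have comm: "M (M a b) x = M x (M a b)" if x: "x \<in> Qcar n" for x
  proof -
    have "M (M a b) x = M a (M b x)" using a1 bQ x by simp
    also have "\<dots> = M a (M x b)" using bc x by simp
    also have "\<dots> = M (M a x) b" using a1 x bQ by simp
    also have "\<dots> = M (M x a) b" using ac x by simp
    also have "\<dots> = M x (M a b)" using a2 x bQ by simp
    finally show ?thesis .
  qed
  have left: "M (M (M a b) x) y = M (M a b) (M x y)" if x: "x \<in> Qcar n" and y: "y \<in> Qcar n" for x y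
  proof -
    have "M (M (M a b) x) y = M (M a (M b x)) y" using a1 bQ x by simp
    also have "\<dots> = M a (M (M b x) y)" using a1 y by simp
    also have "\<dots> = M a (M b (M x y))" using b1 x y by simp
    also have "\<dots> = M (M a b) (M x y)" using a1 bQ by simp
    finally show ?thesis .
  qed
  have middle: "M (M x (M a b)) y = M x (M (M a b) y)" if x: "x \<in> Qcar n" and y: "y \<in> Qcar n" for x y
  proof -
    have "M (M x (M a b)) y = M (M a b) (M x y)" using comm[OF x] left[OF x y] by simp
    also have "\<dots> = M a (M b (M x y))" using a1 bQ by simp
    also have "\<dots> = M a (M (M b x) y)" using b1 x y by simp
    also have "\<dots> = M a (M (M x b) y)" using bc x by simp
    also have "\<dots> = M a (M x (M b y))" using b2 x y by simp
    also have "\<dots> = M (M a x) (M b y)" using a1 x by simp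
    also have "\<dots> = M (M x a) (M b y)" using ac x by simp
    also have "\<dots> = M x (M a (M b y))" using a2 x by simp
    also have "\<dots> = M x (M (M a b) y)" using a1 bQ y by simp
    finally show ?thesis .
  qed
  show ?thesis by (rule center_commI[OF Qmult_closed comm left middle])
qed

lemma center_inverse_closed:
  assumes a: "a \<in> center n g \<gamma>" and a': "a' \<in> Qcar n" and inv: "M a a' = (0, 0)"
  shows "a' \<in> center n g \<gamma>"
proof -
  note ac = centerD(2)[OF a] and a1 = centerD(3)[OF a] and a2 = centerD(4)[OF a]
  note cancel = Qmult_left_cancel[OF Qmult_closed Qmult_closed]
  have ax: "M a (M a' x) = x" if x: "x \<in> Qcar n" for x
    using a1[OF a' x] inv Qmult_unit_left[OF x] by simp
  have xa: "M a (M x a') = x" if x: "x \<in> Qcar n" for x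
  proof -
    have "M a (M x a') = M (M a x) a'" using a1 x a' by simp
    also have "\<dots> = M (M x a) a'" using ac x by simp
    also have "\<dots> = x" using a2 x a' inv Qmult_unit_right[OF x] by simp
    finally show ?thesis .
  qed
  show ?thesis
  proof (rule center_commI[OF a'])
    fix x :: "int \<times> 'a" assume x: "x \<in> Qcar n"
    show "M a' x = M x a'" by (rule cancel[of a]) (simp add: ax[OF x] xa[OF x])
    fix y :: "int \<times> 'a" assume y: "y \<in> Qcar n"
    have "M a (M (M a' x) y) = M (M a (M a' x)) y" using a1 y by simp
    also have "\<dots> = M a (M a' (M x y))" using ax x ax[of "M x y"] by simp
    finally show "M (M a' x) y = M a' (M x y)" by (rule cancel)
    have "M a (M (M x a') y) = M (M a (M x a')) y" using a1 y by simp
    also have "\<dots> = M x (M (M a a') y)" using xa x inv Qmult_unit_left y by simp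
    also have "\<dots> = M x (M a (M a' y))" using a1 a' y by simp
    also have "\<dots> = M (M x a) (M a' y)" using a2 x by simp
    also have "\<dots> = M (M a x) (M a' y)" using ac x by simp
    also have "\<dots> = M a (M x (M a' y))" using a1 x by simp
    finally show "M (M x a') y = M x (M a' y)" by (rule cancel)
  qed
qed

lemma fixed_gpow:
  assumes "g w = w"
  shows "gpow g m w = w"
proof -
  have "inv g w = w" using inv_g_g[of w] assms by simp
  then have "(g ^^ k) w = w" "(inv g ^^ k) w = w" for k by (induct k) (simp_all add: assms)
  then show ?thesis by (simp add: gpow_def)
qed

lemma fixed_add:
  assumes "g x = x" "g y = y" "\<gamma> x y = 0"
  shows "g (x + y) = x + y"
  using arg_cong[OF inv_g_add[of x y], of g] assms by simp

lemma fixed_uminus: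
  assumes "g x = x"
  shows "g (- x) = - x"
proof -
  have "inv g (x + g (- x)) = 0" using inv_g_add[of x "- x"] assms by (simp add: gamma_uminus_right)
  then have "x + g (- x) = 0" using g_inv_g[of "x + g (- x)"] by simp
  then show ?thesis by (simp add: eq_neg_iff_add_eq_0 add.commute)
qed

lemma gamma_nsmul_left: "\<gamma> (nsmul m x) y = nsmul m (\<gamma> x y)"
  by (induct m) (simp_all add: gamma_add_left)

lemma gamma_zsmul_left: "\<gamma> (zsmul i x) y = zsmul i (\<gamma> x y)"
  by (simp add: zsmul_def gamma_nsmul_left gamma_uminus_left)

lemma gamma_zsmul_right: "\<gamma> x (zsmul i y) = zsmul i (\<gamma> x y)"
  using gamma_zsmul_left gamma_sym by metis

lemma gamma_zsmul_zsmul [simp]: "\<gamma> (zsmul a z) (zsmul b z) = 0"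
  by (simp add: gamma_zsmul_left gamma_zsmul_right)

lemma fixed_zsmul:
  assumes "g z = z"
  shows "g (zsmul i z) = zsmul i z"
proof -
  have "g (nsmul m z) = nsmul m z" for m
  proof (induct m)
    case (Suc m)
    then show ?case using fixed_add[OF assms Suc] gamma_zsmul_zsmul[of 1 z "int m"] by simp
  qed simp
  then show ?thesis by (simp add: zsmul_def fixed_uminus)
qed

lemma Qpow_in_Qcar [simp]: "Qpow n k z i \<in> Qcar n"
  by (simp add: Qpow_def Qcar_def)

lemma Qpow_one: "Qpow n k z 1 = (k mod int n, z)"
  by (simp add: Qpow_def)

lemma Qpow_zero: "Qpow n k z 0 = (0, 0)"
  by (simp add: Qpow_def)

lemma Qpow_add:
  assumes "g z = z"
  shows "M (Qpow n k z a) (Qpow n k z b) = Qpow n k z (a + b)"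
proof -
  have "((k * a) mod int n + (k * b) mod int n) mod int n = (k * (a + b)) mod int n"
    by (simp add: mod_add_eq distrib_left)
  moreover have "twist (zsmul a z) A (zsmul b z) = 0" for A
    by (simp add: twist_def fixed_gpow fixed_zsmul assms)
  ultimately show ?thesis
    by (simp add: Qpow_def Qmult_eq fixed_gpow fixed_zsmul assms zsmul_add)
qed

text \<open>A central element commutes with \<open>(b, 0)\<close>, which forces \<open>g\<^sup>-\<^sup>1 z = z\<close>; when \<open>n = 1\<close>, \<open>(b, 0)\<close>
  is not in the carrier, but then \<open>g = g\<^sup>n = id\<close>.\<close>

lemma center_snd_fixed:
  assumes "(k, z) \<in> center n g \<gamma>"
  shows "g z = z"
proof (cases "n = 1")
  case True
  then have "g ^^ 1 = id" using admissible_order by (simp add: admissible_order_def)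
  then show ?thesis by simp
next
  case False
  then have "(1::int, 0::'a) \<in> Qcar n" by (cases "n = 0") (simp_all add: Qcar_def)
  then have "M (k, z) (1, 0) = M (1, 0) (k, z)" using centerD(2)[OF assms] by blast
  then have "gpow g (- 1) z = z" by (simp add: Qmult_eq add.commute)
  then have "inv g z = z" by (simp add: gpow_def)
  then show ?thesis by (metis g_inv_g)
qed

lemma Qpow_in_center:
  assumes c: "(k mod int n, z) \<in> center n g \<gamma>"
  shows "Qpow n k z i \<in> center n g \<gamma>"
proof -
  have gz: "g z = z" using center_snd_fixed[OF c] .
  have one: "Qpow n k z 1 \<in> center n g \<gamma>" using c by (simp add: Qpow_one)
  have minus_one: "Qpow n k z (- 1) \<in> center n g \<gamma>"
    by (rule center_inverse_closed[OF one]) (simp_all add: Qpow_add gz Qpow_zero)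
  show ?thesis
  proof (induct i rule: int_induct[where k = 0])
    case (step1 i)
    then show ?case using center_Qmult_closed[OF step1(2) one] by (simp add: Qpow_add gz)
  next
    case (step2 i)
    then show ?case using center_Qmult_closed[OF step2(2) minus_one] by (simp add: Qpow_add gz)
  qed (simp add: Qpow_zero unit_in_center)
qed

lemma subloop_range_Qpow:
  assumes c: "(k mod int n, z) \<in> center n g \<gamma>"
  shows "subloop n g \<gamma> (range (Qpow n k z))"
proof -
  have gz: "g z = z" using center_snd_fixed[OF c] .
  have "Qldiv n g \<gamma> (Qpow n k z a) (Qpow n k z b) = Qpow n k z (b - a)"
   and "Qrdiv n g \<gamma> (Qpow n k z b) (Qpow n k z a) = Qpow n k z (b - a)" for a b
    by (rule Qldiv_eqI Qrdiv_eqI; simp add: Qpow_add gz Qpow_in_center c)+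
  then show ?thesis unfolding subloop_def by (auto simp: Qpow_add gz)
qed

lemma Qpow_in_subloop:
  assumes c: "(k mod int n, z) \<in> center n g \<gamma>" and T: "subloop n g \<gamma> T"
    and a: "(k mod int n, z) \<in> T"
  shows "Qpow n k z i \<in> T"
proof -
  have gz: "g z = z" using center_snd_fixed[OF c] .
  have a1: "Qpow n k z 1 \<in> T" using a by (simp add: Qpow_one)
  have ldiv: "Qldiv n g \<gamma> (Qpow n k z 1) (Qpow n k z j) = Qpow n k z (j - 1)" for j
    by (rule Qldiv_eqI) (simp_all add: Qpow_add gz)
  have closed: "M u v \<in> T" "Qldiv n g \<gamma> u v \<in> T" if "u \<in> T" "v \<in> T" for u v
    using T that unfolding subloop_def by auto
  show ?thesis
  proof (induct i rule: int_induct[where k = 1])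
    case (step1 i)
    then show ?case using closed(1)[OF step1(2) a1] by (simp add: Qpow_add gz)
  next
    case (step2 i)
    then show ?case using closed(2)[OF a1 step2(2)] ldiv by simp
  qed (rule a1)
qed

lemma gen_subloop_eq_range_Qpow:
  assumes "(k mod int n, z) \<in> center n g \<gamma>"
  shows "gen_subloop n g \<gamma> (k mod int n, z) = range (Qpow n k z)"
proof
  have "(k mod int n, z) \<in> range (Qpow n k z)" by (metis Qpow_one rangeI)
  then show "gen_subloop n g \<gamma> (k mod int n, z) \<subseteq> range (Qpow n k z)"
    unfolding gen_subloop_def using subloop_range_Qpow[OF assms] by blast
  show "range (Qpow n k z) \<subseteq> gen_subloop n g \<gamma> (k mod int n, z)"
    unfolding gen_subloop_def using Qpow_in_subloop[OF assms] by blast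
qed

lemma normal_subloop_range_Qpow:
  assumes "(k mod int n, z) \<in> center n g \<gamma>"
  shows "normal_subloop n g \<gamma> (range (Qpow n k z))"
  unfolding normal_subloop_def
proof (intro conjI ballI subloop_range_Qpow[OF assms])
  have central: "s \<in> center n g \<gamma>" if "s \<in> range (Qpow n k z)" for s
    using that Qpow_in_center[OF assms] by blast
  fix x y :: "int \<times> 'a" assume x: "x \<in> Qcar n" and y: "y \<in> Qcar n"
  show "(\<lambda>s. M x s) ` range (Qpow n k z) = (\<lambda>s. M s x) ` range (Qpow n k z)"
    by (rule image_cong[OF refl]) (metis central centerD(2) x)
  show "(\<lambda>s. M x (M y s)) ` range (Qpow n k z) = (\<lambda>s. M (M x y) s) ` range (Qpow n k z)"
    by (rule image_cong[OF refl]) (metis central centerD(5) x y)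
  show "(\<lambda>s. M (M s x) y) ` range (Qpow n k z) = (\<lambda>s. M s (M x y)) ` range (Qpow n k z)"
    by (rule image_cong[OF refl]) (metis central centerD(3) x y)
qed

lemma normal_subloopD:
  assumes "normal_subloop n g \<gamma> S" "x \<in> Qcar n" "y \<in> Qcar n"
  shows "(\<lambda>s. M x s) ` S = (\<lambda>s. M s x) ` S"
    and "(\<lambda>s. M x (M y s)) ` S = (\<lambda>s. M (M x y) s) ` S"
    and "(\<lambda>s. M (M s x) y) ` S = (\<lambda>s. M s (M x y)) ` S"
  using assms unfolding normal_subloop_def by blast+

lemma subloop_fst_inj_on:
  assumes S: "subloop n g \<gamma> S" and fibre: "S \<inter> {(0, x) | x. True} = {(0, 0)}"
  shows "inj_on fst S"
proof
  fix s s' assume s: "s \<in> S" "s' \<in> S" "fst s = fst s'"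
  have SQ: "S \<subseteq> Qcar n" using S by (simp add: subloop_def)
  define c where "c = Qldiv n g \<gamma> s s'"
  have cS: "c \<in> S" using S s unfolding subloop_def c_def by blast
  have sc: "M s c = s'" using Qldiv(2) SQ s(2) unfolding c_def by blast
  have "fst s mod int n = fst s" "fst c mod int n = fst c" using SQ s(1) cS by (auto simp: Qcar_def)
  moreover have "fst s' = (fst s + fst c) mod int n" using arg_cong[OF sc, of fst] by (simp add: fst_Qmult)
  then have "(fst s + fst c) mod int n = (fst s + 0) mod int n" using s(3) calculation by simp
  ultimately have "fst c = 0" by (intro mod_add_left_cancel_normalized[of "fst c" "int n" 0 "fst s"]) simp_all
  then have "c = (0, 0)" using cS fibre by (cases c) auto
  then show "s = s'" using sc Qmult_unit_right[OF subsetD[OF SQ s(1)]] by simp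
qed

lemma normal_subloop_subset_center:
  assumes NS: "normal_subloop n g \<gamma> S" and fst_inj: "inj_on fst S" and s: "s \<in> S"
  shows "s \<in> center n g \<gamma>"
proof -
  have SQ: "S \<subseteq> Qcar n" using NS by (simp add: normal_subloop_def subloop_def)
  note pointwise = image_eq_imp_eq_on_fst_injective[OF _ fst_inj SQ s]
  have comm: "M s x = M x s" if "x \<in> Qcar n" for x :: "int \<times> 'a"
    using pointwise[OF normal_subloopD(1)[OF NS that that], where c = "fst x"]
    by (simp add: fst_Qmult add.commute)
  have assoc_left: "M (M s x) y = M s (M x y)" if "x \<in> Qcar n" "y \<in> Qcar n" for x y :: "int \<times> 'a"
    using pointwise[OF normal_subloopD(3)[OF NS that], where c = "fst x + fst y"]
    by (simp add: fst_Qmult_assoc ac_simps)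
  have assoc_right: "M (M x y) s = M x (M y s)" if "x \<in> Qcar n" "y \<in> Qcar n" for x y :: "int \<times> 'a"
    using pointwise[OF normal_subloopD(2)[OF NS that], where c = "fst x + fst y"]
    by (simp add: fst_Qmult_assoc)
  show ?thesis
  proof (rule centerI[OF subsetD[OF SQ s] comm assoc_left _ assoc_right])
    fix x y :: "int \<times> 'a" assume x: "x \<in> Qcar n" and y: "y \<in> Qcar n"
    have "M (M x s) y = M s (M x y)" using comm[OF x] assoc_left[OF x y] by simp
    also have "\<dots> = M x (M y s)" using comm[of "M x y"] assoc_right[OF x y] by simp
    also have "\<dots> = M x (M s y)" using comm[OF y] by simp
    finally show "M (M x s) y = M x (M s y)" .
  qed
qed

lemma subloop_fst_diff:
  assumes S: "subloop n g \<gamma> S" and s: "s \<in> S" and t: "t \<in> S"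
  shows "(fst t - fst s) mod int n \<in> fst ` S"
proof -
  define c where "c = Qldiv n g \<gamma> s t"
  have c: "c \<in> S" using S s t unfolding subloop_def c_def by blast
  have "M s c = t" using Qldiv(2)[of t s] S t unfolding c_def subloop_def by blast
  then have "fst t = (fst s + fst c) mod int n" by (metis fst_Qmult)
  then have "(fst t - fst s) mod int n = fst c mod int n" by (simp add: mod_diff_left_eq)
  also have "\<dots> = fst c" using S c by (auto simp: subloop_def Qcar_def)
  finally show ?thesis using c by blast
qed

lemma central_subloop_cyclic:
  assumes S: "subloop n g \<gamma> S" and fst_inj: "inj_on fst S" and unit: "(0, 0) \<in> S"
    and central: "S \<subseteq> center n g \<gamma>"
  shows "\<exists>k z. S = range (Qpow n k z) \<and> (k mod int n, z) \<in> center n g \<gamma>"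
proof -
  have SQ: "S \<subseteq> Qcar n" using S by (simp add: subloop_def)
  have fst_mod: "fst s mod int n = fst s" if "s \<in> S" for s using SQ that by (auto simp: Qcar_def)
  define Z where "Z i \<longleftrightarrow> i mod int n \<in> fst ` S" for i
  have Z_zero: "Z 0" using unit unfolding Z_def by force
  have "Z (i - j)" if ij: "Z i" "Z j" for i j
  proof -
    obtain t s where ts: "t \<in> S" "s \<in> S" "fst t = i mod int n" "fst s = j mod int n"
      using ij unfolding Z_def by force
    have "(i - j) mod int n = (fst t - fst s) mod int n" using ts(3,4) by (simp add: mod_diff_eq)
    then show ?thesis using subloop_fst_diff[OF S ts(2,1)] unfolding Z_def by simp
  qed
  with Z_zero have Z_iff: "Z i \<longleftrightarrow> int (int_subgroup_gen Z) dvd i" for i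
    by (rule int_subgroup_gen_dvd_iff)
  define k where "k = int (int_subgroup_gen Z)"
  obtain a where a: "a \<in> S" "fst a = k mod int n" using Z_iff[of k] unfolding Z_def k_def by auto
  define z where "z = snd a"
  have az: "a = (k mod int n, z)" using a(2) unfolding z_def by (cases a) simp
  have c: "(k mod int n, z) \<in> center n g \<gamma>" using central a(1) az by blast
  have "S \<subseteq> range (Qpow n k z)"
  proof
    fix s assume s: "s \<in> S"
    then have "Z (fst s)" using fst_mod[OF s] imageI[OF s, of fst] unfolding Z_def by simp
    then obtain q where q: "fst s = k * q" using Z_iff unfolding k_def by (auto elim: dvdE)
    have "Qpow n k z q \<in> S" using Qpow_in_subloop[OF c S] a(1) az by simp
    moreover have "fst (Qpow n k z q) = fst s" using q fst_mod[OF s] by (simp add: Qpow_def)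
    ultimately have "s = Qpow n k z q" using fst_inj s by (simp add: inj_on_eq_iff)
    then show "s \<in> range (Qpow n k z)" by simp
  qed
  moreover have "range (Qpow n k z) \<subseteq> S" using Qpow_in_subloop[OF c S] a(1) az by blast
  ultimately show ?thesis using c by blast
qed

lemma normal_subloop_trivial_fibres_iff:
  "normal_subloop n g \<gamma> S \<and> S \<inter> {(0, x) | x. True} = {(0, 0)}
      \<and> S \<inter> {(i, 0) | i. i mod int n = i} = {(0, 0)}
   \<longleftrightarrow> (\<exists>k z. S = range (Qpow n k z) \<and> cord n k = addord z \<and> (k mod int n, z) \<in> center n g \<gamma>)"
proof
  assume H: "normal_subloop n g \<gamma> S \<and> S \<inter> {(0, x) | x. True} = {(0, 0)}
        \<and> S \<inter> {(i, 0) | i. i mod int n = i} = {(0, 0)}"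
  then have SL: "subloop n g \<gamma> S" by (simp add: normal_subloop_def)
  have inj: "inj_on fst S" using subloop_fst_inj_on[OF SL] H by blast
  have "S \<subseteq> center n g \<gamma>" using normal_subloop_subset_center[OF _ inj] H by blast
  then obtain k z where Sk: "S = range (Qpow n k z)" and c: "(k mod int n, z) \<in> center n g \<gamma>"
    using central_subloop_cyclic[OF SL inj] H by blast
  have "cord n k = addord z" unfolding cord_eq_addord_iff using H Sk by simp
  with Sk c show "\<exists>k z. S = range (Qpow n k z) \<and> cord n k = addord z \<and> (k mod int n, z) \<in> center n g \<gamma>"
    by blast
next
  assume "\<exists>k z. S = range (Qpow n k z) \<and> cord n k = addord z \<and> (k mod int n, z) \<in> center n g \<gamma>"
  then obtain k z where Sk: "S = range (Qpow n k z)" and ord: "cord n k = addord z"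
    and c: "(k mod int n, z) \<in> center n g \<gamma>" by blast
  show "normal_subloop n g \<gamma> S \<and> S \<inter> {(0, x) | x. True} = {(0, 0)}
        \<and> S \<inter> {(i, 0) | i. i mod int n = i} = {(0, 0)}"
    using normal_subloop_range_Qpow[OF c] ord unfolding Sk cord_eq_addord_iff by simp
qed

end

theorem mainTheorem17:
  fixes n :: nat and g :: "'a::ab_group_add \<Rightarrow> 'a" and \<gamma> :: "'a \<Rightarrow> 'a \<Rightarrow> 'a"
    and S :: "(int \<times> 'a) set"
  assumes "construction_pair g \<gamma>"
    and "admissible_order n g \<gamma>"
    and "S \<subseteq> Qcar n" and "S \<noteq> {}"
  shows "(normal_subloop n g \<gamma> S
          \<and> S \<inter> {(0, x) | x. True} = {(0, 0)}
          \<and> S \<inter> {(i, 0) | i. i \<in> fst ` Qcar n} = {(0, 0)})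
     \<longleftrightarrow> (\<exists>(k::int) (z::'a).
             S = gen_subloop n g \<gamma> (k mod int n, z)
           \<and> S = {((k * i) mod int n, zsmul i z) | i. True}
           \<and> cord n k = addord z
           \<and> (k mod int n, z) \<in> center n g \<gamma>)"
proof -
  interpret Qloop n g \<gamma> using assms(1,2) by unfold_locales
  note normal_subloop_trivial_fibres_iff[of S]
  moreover have "(\<exists>k z. S = gen_subloop n g \<gamma> (k mod int n, z) \<and> S = range (Qpow n k z)
        \<and> cord n k = addord z \<and> (k mod int n, z) \<in> center n g \<gamma>)
    \<longleftrightarrow> (\<exists>k z. S = range (Qpow n k z) \<and> cord n k = addord z \<and> (k mod int n, z) \<in> center n g \<gamma>)"
    using gen_subloop_eq_range_Qpow by metis
  ultimately show ?thesis unfolding fst_Qcar range_Qpow mem_Collect_eq by simp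
qed

end
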